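(* For all integers $n\ge 2$ and $k\ge 1$, $b(n+1,k)\ge 2\,b(n,k)$.
   Context: A complete non-ambiguous matrix (CNM) of size $n$ is an $n\times n$ matrix $M=(m_{i,j})$ with entries in $\{0,1\}$ whose support $T=\{(i,j): m_{i,j}=1\}$ (whose elements are called vertices) satisfies: (1) $(1,1)\in T$; (2) for every $p=(i,j)\in T$ with $p\neq(1,1)$, exactly one of the following holds: there is $(i',j)\in T$ with $i'<i$, or there is $(i,j')\in T$ with $j'<j$; (3) every row and every column of $M$ contains at least one vertex; (4) define the parent of $p=(i,j)\neq(1,1)$ to be $(i',j)$ with $i'<i$ maximal if such a vertex exists, and otherwise $(i,j')$ with $j'<j$ maximal; then every vertex is the parent of either zero or exactly two vertices. A vertex with no children is a leaf. The leaf matrix $p(M)$ is obtained from $M$ by replacing all non-leaf vertices by $0$ (it is a permutation matrix). For $n\ge 1$ and $k\ge 0$, $b(n,k)$ denotes the number of permutations $\sigma\in S_n$ such that there are exactly $k$ CNMs $M$ of size $n$ whose leaf matrix $p(M)$ equals the permutation matrix of $\sigma$ (the matrix with $1$'s at positions $(i,\sigma(i))$). *)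

theory Defs
  imports "HOL-Combinatorics.Permutations"
begin

text \<open>A 0/1 matrix of size n is represented by its support T (a set of positions (i,j)
  with 1 \<le> i,j \<le> n, 1-based indices as in the paper).\<close>

definition parent :: "(nat \<times> nat) set \<Rightarrow> nat \<times> nat \<Rightarrow> nat \<times> nat" where
  "parent T p = (case p of (i, j) \<Rightarrow>
     if \<exists>i'<i. (i', j) \<in> T then (Max {i'. i' < i \<and> (i', j) \<in> T}, j)
     else (i, Max {j'. j' < j \<and> (i, j') \<in> T}))"

definition children :: "(nat \<times> nat) set \<Rightarrow> nat \<times> nat \<Rightarrow> (nat \<times> nat) set" where
  "children T p = {q \<in> T. q \<noteq> (1, 1) \<and> parent T q = p}"

definition is_CNM :: "nat \<Rightarrow> (nat \<times> nat) set \<Rightarrow> bool" where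
  "is_CNM n T \<longleftrightarrow>
     T \<subseteq> {1..n} \<times> {1..n} \<and>
     (1, 1) \<in> T \<and>
     (\<forall>(i, j) \<in> T. (i, j) \<noteq> (1, 1) \<longrightarrow>
        ((\<exists>i'<i. (i', j) \<in> T) \<noteq> (\<exists>j'<j. (i, j') \<in> T))) \<and>
     (\<forall>i\<in>{1..n}. \<exists>j. (i, j) \<in> T) \<and>
     (\<forall>j\<in>{1..n}. \<exists>i. (i, j) \<in> T) \<and>
     (\<forall>p \<in> T. card (children T p) = 0 \<or> card (children T p) = 2)"

definition leaves :: "(nat \<times> nat) set \<Rightarrow> (nat \<times> nat) set" where
  "leaves T = {p \<in> T. children T p = {}}"

definition perm_matrix :: "nat \<Rightarrow> (nat \<Rightarrow> nat) \<Rightarrow> (nat \<times> nat) set" where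
  "perm_matrix n \<sigma> = {(i, \<sigma> i) | i. i \<in> {1..n}}"

definition num_CNM :: "nat \<Rightarrow> (nat \<Rightarrow> nat) \<Rightarrow> nat" where
  "num_CNM n \<sigma> = card {T. is_CNM n T \<and> leaves T = perm_matrix n \<sigma>}"

definition b :: "nat \<Rightarrow> nat \<Rightarrow> nat" where
  "b n k = card {\<sigma>. \<sigma> permutes {1..n} \<and> num_CNM n \<sigma> = k}"

end

theory Submission
  imports Defs
begin

text \<open>Extend a permutation \<open>\<sigma>\<close> of \<open>{1..n}\<close> to \<open>\<sigma>'\<close> with \<open>\<sigma>' n = n + 1\<close> and
  \<open>\<sigma>' (n + 1) = \<sigma> n\<close>. The CNMs with leaf matrix \<open>\<sigma>'\<close> are exactly the CNMs with leaf matrix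
  \<open>\<sigma>\<close> with the two leaves \<open>(n + 1, \<sigma> n)\<close> and \<open>(n, n + 1)\<close> grafted onto the leaf
  \<open>(n, \<sigma> n)\<close>, so \<open>\<sigma> \<mapsto> \<sigma>'\<close> preserves the number of CNMs. Transposition shows that
  \<open>\<sigma>\<close> and \<open>\<sigma>\<inverse>\<close> have equally many CNMs, which gives the second injection
  \<open>\<sigma> \<mapsto> ((\<sigma>\<inverse>)')\<inverse>\<close>. The two images are disjoint: a common element forces \<open>\<sigma> n = n\<close>,
  and then the leaf \<open>(n, n)\<close> has no vertex above it and none to its left, so \<open>\<sigma>\<close> has no CNM
  at all, contradicting \<open>k \<ge> 1\<close>.\<close>

definition has_above :: "(nat \<times> nat) set \<Rightarrow> nat \<Rightarrow> nat \<Rightarrow> bool" where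
  "has_above T i j \<longleftrightarrow> (\<exists>i'<i. (i', j) \<in> T)"

definition has_left :: "(nat \<times> nat) set \<Rightarrow> nat \<Rightarrow> nat \<Rightarrow> bool" where
  "has_left T i j \<longleftrightarrow> (\<exists>j'<j. (i, j') \<in> T)"

definition exclusive_parent :: "(nat \<times> nat) set \<Rightarrow> bool" where
  "exclusive_parent T \<longleftrightarrow>
     (\<forall>i j. (i, j) \<in> T \<longrightarrow> (i, j) \<noteq> (1, 1) \<longrightarrow> has_above T i j \<noteq> has_left T i j)"

definition binary_branching :: "(nat \<times> nat) set \<Rightarrow> bool" where
  "binary_branching T \<longleftrightarrow> (\<forall>p\<in>T. card (children T p) = 0 \<or> card (children T p) = 2)"

lemma is_CNM_iff:
  "is_CNM n T \<longleftrightarrow> T \<subseteq> {1..n} \<times> {1..n} \<and> (1, 1) \<in> T \<and> exclusive_parent T \<and>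
     (\<forall>i\<in>{1..n}. \<exists>j. (i, j) \<in> T) \<and> (\<forall>j\<in>{1..n}. \<exists>i. (i, j) \<in> T) \<and> binary_branching T"
  unfolding is_CNM_def exclusive_parent_def has_above_def has_left_def binary_branching_def
  by auto

lemma is_CNM_finite: "is_CNM n T \<Longrightarrow> finite T"
  unfolding is_CNM_iff by (meson finite_SigmaI finite_atLeastAtMost finite_subset)

lemma parent_above_eq:
  assumes "i' < i" "(i', j) \<in> T" "\<And>x. i' < x \<Longrightarrow> x < i \<Longrightarrow> (x, j) \<notin> T"
  shows "parent T (i, j) = (i', j)"
proof -
  have fin: "finite {x. x < i \<and> (x, j) \<in> T}" by (rule finite_subset[of _ "{..<i}"]) auto
  have "Max {x. x < i \<and> (x, j) \<in> T} = i'"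
    using assms by (intro Max_eqI[OF fin]) (auto simp: not_le[symmetric])
  then show ?thesis using assms(1,2) unfolding parent_def by auto
qed

lemma parent_left_eq:
  assumes "\<not> has_above T i c" "m < c" "(i, m) \<in> T" "\<And>y. m < y \<Longrightarrow> y < c \<Longrightarrow> (i, y) \<notin> T"
  shows "parent T (i, c) = (i, m)"
proof -
  have fin: "finite {y. y < c \<and> (i, y) \<in> T}" by (rule finite_subset[of _ "{..<c}"]) auto
  have "Max {y. y < c \<and> (i, y) \<in> T} = m"
    using assms by (intro Max_eqI[OF fin]) (auto simp: not_le[symmetric])
  then show ?thesis using assms(1) unfolding parent_def has_above_def by auto
qed

lemma parent_above:
  assumes "has_above T i j"
  obtains i' where "parent T (i, j) = (i', j)" "i' < i" "(i', j) \<in> T"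
    "\<And>x. i' < x \<Longrightarrow> x < i \<Longrightarrow> (x, j) \<notin> T"
proof -
  let ?S = "{x. x < i \<and> (x, j) \<in> T}"
  have fin: "finite ?S" by (rule finite_subset[of _ "{..<i}"]) auto
  have "?S \<noteq> {}" using assms unfolding has_above_def by auto
  then have max: "Max ?S \<in> ?S" using Max_in[OF fin] by blast
  show ?thesis
  proof (rule that)
    show "parent T (i, j) = (Max ?S, j)" using assms unfolding parent_def has_above_def by auto
    show "Max ?S < i" "(Max ?S, j) \<in> T" using max by auto
    show "(x, j) \<notin> T" if "Max ?S < x" "x < i" for x
      using that Max_ge[OF fin, of x] by fastforce
  qed
qed

lemma parent_left:
  assumes "\<not> has_above T i j" "has_left T i j"
  obtains j' where "parent T (i, j) = (i, j')" "j' < j" "(i, j') \<in> T"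
    "\<And>y. j' < y \<Longrightarrow> y < j \<Longrightarrow> (i, y) \<notin> T"
proof -
  let ?S = "{y. y < j \<and> (i, y) \<in> T}"
  have fin: "finite ?S" by (rule finite_subset[of _ "{..<j}"]) auto
  have "?S \<noteq> {}" using assms unfolding has_left_def by auto
  then have max: "Max ?S \<in> ?S" using Max_in[OF fin] by blast
  show ?thesis
  proof (rule that)
    show "parent T (i, j) = (i, Max ?S)" using assms unfolding parent_def has_above_def by auto
    show "Max ?S < j" "(i, Max ?S) \<in> T" using max by auto
    show "(i, y) \<notin> T" if "Max ?S < y" "y < j" for y
      using that Max_ge[OF fin, of y] by fastforce
  qed
qed

lemma mem_childrenD:
  assumes "exclusive_parent T" "(a, c) \<in> children T (i, m)"
  shows "(a, c) \<in> T" "(i, m) \<in> T"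
    "i < a \<and> c = m \<and> (\<forall>x. i < x \<longrightarrow> x < a \<longrightarrow> (x, m) \<notin> T) \<or>
     a = i \<and> m < c \<and> (\<forall>y. m < y \<longrightarrow> y < c \<longrightarrow> (i, y) \<notin> T)"
proof -
  have q: "(a, c) \<in> T" "(a, c) \<noteq> (1, 1)" "parent T (a, c) = (i, m)"
    using assms(2) unfolding children_def by auto
  then show "(a, c) \<in> T" by simp
  have "(i, m) \<in> T \<and> (i < a \<and> c = m \<and> (\<forall>x. i < x \<longrightarrow> x < a \<longrightarrow> (x, m) \<notin> T) \<or>
     a = i \<and> m < c \<and> (\<forall>y. m < y \<longrightarrow> y < c \<longrightarrow> (i, y) \<notin> T))"
  proof (cases "has_above T a c")
    case True
    obtain i' where "parent T (a, c) = (i', c)" "i' < a" "(i', c) \<in> T"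
      "\<And>x. i' < x \<Longrightarrow> x < a \<Longrightarrow> (x, c) \<notin> T"
      using parent_above[OF True] by blast
    with q show ?thesis by auto
  next
    case False
    moreover have "has_left T a c" using False assms(1) q unfolding exclusive_parent_def by auto
    ultimately obtain c' where "parent T (a, c) = (a, c')" "c' < c" "(a, c') \<in> T"
      "\<And>y. c' < y \<Longrightarrow> y < c \<Longrightarrow> (a, y) \<notin> T"
      using parent_left by blast
    with q show ?thesis by auto
  qed
  then show "(i, m) \<in> T"
    "i < a \<and> c = m \<and> (\<forall>x. i < x \<longrightarrow> x < a \<longrightarrow> (x, m) \<notin> T) \<or>
     a = i \<and> m < c \<and> (\<forall>y. m < y \<longrightarrow> y < c \<longrightarrow> (i, y) \<notin> T)"
    by auto
qed

lemma children_eq_empty_if_not_mem: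
  assumes "exclusive_parent T" "p \<notin> T"
  shows "children T p = {}"
  using mem_childrenD(2)[OF assms(1)] assms(2) by (cases p) fastforce

lemma children_eq_if_same_direction:
  assumes "exclusive_parent T" "(a, c) \<in> children T (i, m)" "(a', c') \<in> children T (i, m)"
    and "i < a \<longleftrightarrow> i < a'"
  shows "(a, c) = (a', c')"
proof -
  note A = mem_childrenD(3)[OF assms(1,2)] and B = mem_childrenD(3)[OF assms(1,3)]
  have "\<not> a < a'" "\<not> a' < a" "\<not> c < c'" "\<not> c' < c"
    using A B assms(4) mem_childrenD(1)[OF assms(1,2)] mem_childrenD(1)[OF assms(1,3)] by auto
  then show ?thesis by simp
qed

lemma two_children_shape:
  assumes "exclusive_parent T" "card (children T (i, m)) = 2"
  obtains a c where "children T (i, m) = {(a, m), (i, c)}" "i < a" "m < c"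
proof -
  obtain p q where pq: "p \<noteq> q" "children T (i, m) = {p, q}"
    using assms(2) card_2_iff by metis
  have dir: "i < fst x \<and> snd x = m \<or> fst x = i \<and> m < snd x" if "x \<in> children T (i, m)" for x
    using mem_childrenD(3)[OF assms(1), of "fst x" "snd x"] that by auto
  have "\<not> (i < fst p \<longleftrightarrow> i < fst q)"
    using children_eq_if_same_direction[OF assms(1), of "fst p" "snd p" i m "fst q" "snd q"] pq
    by auto
  then consider "i < fst p" "\<not> i < fst q" | "\<not> i < fst p" "i < fst q" by blast
  then show ?thesis
  proof cases
    case 1
    then show ?thesis using dir[of p] dir[of q] pq that[of "fst p" "snd q"] by (cases p, cases q) auto
  next
    case 2
    then show ?thesis using dir[of p] dir[of q] pq that[of "fst q" "snd p"] by (cases p, cases q) auto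
  qed
qed

lemma leaf_if_lowest_in_column:
  assumes "is_CNM n T" "(i, m) \<in> T" "\<And>a. i < a \<Longrightarrow> (a, m) \<notin> T"
  shows "(i, m) \<in> leaves T"
proof -
  have T: "exclusive_parent T" "binary_branching T" "finite T"
    using assms(1) is_CNM_finite unfolding is_CNM_iff by auto
  have "card (children T (i, m)) \<noteq> 2"
  proof
    assume "card (children T (i, m)) = 2"
    then obtain a c where "children T (i, m) = {(a, m), (i, c)}" "i < a"
      using two_children_shape[OF T(1)] by metis
    then show False using mem_childrenD(1)[OF T(1), of a m i m] assms(3) by auto
  qed
  then have "card (children T (i, m)) = 0" using T(2) assms(2) unfolding binary_branching_def by auto
  moreover have "finite (children T (i, m))" using T(3) unfolding children_def by auto
  ultimately show ?thesis using assms(2) unfolding leaves_def by auto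
qed

lemma leaf_if_rightmost_in_row:
  assumes "is_CNM n T" "(i, m) \<in> T" "\<And>c. m < c \<Longrightarrow> (i, c) \<notin> T"
  shows "(i, m) \<in> leaves T"
proof -
  have T: "exclusive_parent T" "binary_branching T" "finite T"
    using assms(1) is_CNM_finite unfolding is_CNM_iff by auto
  have "card (children T (i, m)) \<noteq> 2"
  proof
    assume "card (children T (i, m)) = 2"
    then obtain a c where "children T (i, m) = {(a, m), (i, c)}" "m < c"
      using two_children_shape[OF T(1)] by metis
    then show False using mem_childrenD(1)[OF T(1), of i c i m] assms(3) by auto
  qed
  then have "card (children T (i, m)) = 0" using T(2) assms(2) unfolding binary_branching_def by auto
  moreover have "finite (children T (i, m))" using T(3) unfolding children_def by auto
  ultimately show ?thesis using assms(2) unfolding leaves_def by auto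
qed

lemma CNM_last_row:
  assumes "is_CNM n T" "leaves T = perm_matrix n \<sigma>" "(n, x) \<in> T"
  shows "x = \<sigma> n"
proof -
  have "(n, x) \<in> leaves T"
    using assms(1,3) by (rule leaf_if_lowest_in_column) (use assms(1) in \<open>auto simp: is_CNM_iff\<close>)
  then show ?thesis using assms(2) unfolding perm_matrix_def by auto
qed

lemma CNM_last_column:
  assumes "is_CNM n T" "leaves T = perm_matrix n \<sigma>" "(y, n) \<in> T"
  shows "\<sigma> y = n"
proof -
  have "(y, n) \<in> leaves T"
    using assms(1,3) by (rule leaf_if_rightmost_in_row) (use assms(1) in \<open>auto simp: is_CNM_iff\<close>)
  then show ?thesis using assms(2) unfolding perm_matrix_def by auto
qed

section \<open>Grafting two leaves\<close>

lemma parent_Un_outside_square: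
  assumes "T \<subseteq> {..n} \<times> {..n}" "A \<inter> {..n} \<times> {..n} = {}" "(i, j) \<in> T"
  shows "has_above (T \<union> A) i j = has_above T i j" "has_left (T \<union> A) i j = has_left T i j"
    "parent (T \<union> A) (i, j) = parent T (i, j)"
proof -
  have col: "{x. x < i \<and> (x, j) \<in> T \<union> A} = {x. x < i \<and> (x, j) \<in> T}"
    and row: "{y. y < j \<and> (i, y) \<in> T \<union> A} = {y. y < j \<and> (i, y) \<in> T}"
    using assms by fastforce+
  show above: "has_above (T \<union> A) i j = has_above T i j"
    using col unfolding has_above_def by blast
  show "has_left (T \<union> A) i j = has_left T i j"
    using row unfolding has_left_def by blast
  show "parent (T \<union> A) (i, j) = parent T (i, j)"
    by (simp only: parent_def prod.case above[unfolded has_above_def] col row)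
qed

lemma exclusive_parent_Un_outside_square:
  assumes "T \<subseteq> {..n} \<times> {..n}" "A \<inter> {..n} \<times> {..n} = {}" "(1, 1) \<notin> A"
  shows "exclusive_parent (T \<union> A) \<longleftrightarrow>
    exclusive_parent T \<and> (\<forall>(i, j)\<in>A. has_above (T \<union> A) i j \<noteq> has_left (T \<union> A) i j)"
  using parent_Un_outside_square(1,2)[OF assms(1,2)] assms(3)
  unfolding exclusive_parent_def by fast

lemma children_Un_outside_square:
  assumes "T \<subseteq> {..n} \<times> {..n}" "A \<inter> {..n} \<times> {..n} = {}" "(1, 1) \<notin> A"
  shows "children (T \<union> A) p = children T p \<union> {q \<in> A. parent (T \<union> A) q = p}"
  using parent_Un_outside_square(3)[OF assms(1,2)] assms(3) unfolding children_def by fastforce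

definition grafted_leaves :: "nat \<Rightarrow> nat \<Rightarrow> (nat \<times> nat) set" where
  "grafted_leaves n j = {(Suc n, j), (n, Suc n)}"

lemma square_Int_grafted_leaves: "T \<subseteq> {1..n} \<times> {1..n} \<Longrightarrow> T \<inter> grafted_leaves n j = {}"
  unfolding grafted_leaves_def by (auto dest: subsetD)

locale graft_site =
  fixes T :: "(nat \<times> nat) set" and n j :: nat
  assumes in_square: "T \<subseteq> {1..n} \<times> {1..n}"
    and vertex: "(n, j) \<in> T"
    and last_row: "\<And>y. (n, y) \<in> T \<Longrightarrow> y = j"
begin

lemma in_squareD: "(a, c) \<in> T \<Longrightarrow> 1 \<le> a \<and> a \<le> n \<and> 1 \<le> c \<and> c \<le> n"
  using in_square by auto

lemma bounds: "1 \<le> n" "1 \<le> j" "j \<le> n"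
  using in_squareD[OF vertex] by auto

lemma grafted_leaves_outside:
  "T \<subseteq> {..n} \<times> {..n}" "grafted_leaves n j \<inter> {..n} \<times> {..n} = {}"
  "(1, 1) \<notin> grafted_leaves n j"
  using in_squareD bounds by (fastforce simp: grafted_leaves_def)+

lemma Int_grafted_leaves: "T \<inter> grafted_leaves n j = {}"
  using in_square by (rule square_Int_grafted_leaves)

lemma not_has_above_new_column: "\<not> has_above (T \<union> grafted_leaves n j) n (Suc n)"
  using in_squareD bounds by (fastforce simp: has_above_def grafted_leaves_def)

lemma parent_grafted_leaf:
  assumes "q \<in> grafted_leaves n j"
  shows "parent (T \<union> grafted_leaves n j) q = (n, j)"
proof -
  have "parent (T \<union> grafted_leaves n j) (Suc n, j) = (n, j)"
    using vertex by (intro parent_above_eq) auto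
  moreover have "parent (T \<union> grafted_leaves n j) (n, Suc n) = (n, j)"
    using not_has_above_new_column vertex bounds
    by (intro parent_left_eq) (auto simp: grafted_leaves_def dest: last_row)
  ultimately show ?thesis using assms by (auto simp: grafted_leaves_def)
qed

lemma children_graft:
  "children (T \<union> grafted_leaves n j) p =
     children T p \<union> (if p = (n, j) then grafted_leaves n j else {})"
  using children_Un_outside_square[OF grafted_leaves_outside] parent_grafted_leaf by auto

lemma exclusive_parent_graft_iff:
  "exclusive_parent (T \<union> grafted_leaves n j) \<longleftrightarrow> exclusive_parent T"
proof -
  have "has_above (T \<union> grafted_leaves n j) (Suc n) j"
    using vertex unfolding has_above_def by blast
  moreover have "has_left (T \<union> grafted_leaves n j) n (Suc n)"
    using vertex bounds unfolding has_left_def by (intro exI[of _ j]) auto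
  moreover have "\<not> has_left (T \<union> grafted_leaves n j) (Suc n) j"
    using in_squareD by (fastforce simp: has_left_def grafted_leaves_def)
  ultimately show ?thesis
    using exclusive_parent_Un_outside_square[OF grafted_leaves_outside]
      not_has_above_new_column
    by (simp add: grafted_leaves_def)
qed

lemma vertex_leaf:
  assumes "exclusive_parent T"
  shows "(n, j) \<in> leaves T"
proof -
  have "children T (n, j) = {}"
  proof (rule equals0I)
    fix q assume q: "q \<in> children T (n, j)"
    obtain a c where ac: "q = (a, c)" by fastforce
    have "(a, c) \<in> T" "n < a \<or> a = n \<and> j < c"
      using mem_childrenD[OF assms, of a c n j] q ac by auto
    then show False using in_squareD[of a c] last_row[of c] by auto
  qed
  then show ?thesis using vertex unfolding leaves_def by simp
qed

lemma binary_branching_graft_iff: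
  assumes "exclusive_parent T"
  shows "binary_branching (T \<union> grafted_leaves n j) \<longleftrightarrow> binary_branching T"
proof -
  have new: "card (children (T \<union> grafted_leaves n j) p) = 0" if "p \<in> grafted_leaves n j" for p
  proof -
    have "p \<notin> T" using that Int_grafted_leaves by blast
    then show ?thesis
      using children_graft[of p] children_eq_empty_if_not_mem[OF assms] vertex by auto
  qed
  have "card (children (T \<union> grafted_leaves n j) (n, j)) = 2" "card (children T (n, j)) = 0"
    using children_graft[of "(n, j)"] vertex_leaf[OF assms] bounds
    by (auto simp: leaves_def grafted_leaves_def)
  moreover have "children (T \<union> grafted_leaves n j) p = children T p" if "p \<noteq> (n, j)" for p
    using that children_graft[of p] by simp
  ultimately show ?thesis
    using new vertex unfolding binary_branching_def by (metis Un_iff)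
qed

lemma leaves_graft:
  assumes "exclusive_parent T"
  shows "leaves (T \<union> grafted_leaves n j) = leaves T - {(n, j)} \<union> grafted_leaves n j"
  using children_graft children_eq_empty_if_not_mem[OF assms] Int_grafted_leaves bounds
  unfolding leaves_def by (auto simp: grafted_leaves_def)

lemma is_CNM_graft_iff: "is_CNM (Suc n) (T \<union> grafted_leaves n j) \<longleftrightarrow> is_CNM n T"
proof -
  have rows: "(\<forall>i\<in>{1..Suc n}. \<exists>k. (i, k) \<in> T \<union> grafted_leaves n j) \<longleftrightarrow>
      (\<forall>i\<in>{1..n}. \<exists>k. (i, k) \<in> T)"
  proof -
    have "(\<exists>k. (i, k) \<in> T \<union> grafted_leaves n j) \<longleftrightarrow> (\<exists>k. (i, k) \<in> T)" if "i \<le> n" for i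
      using that vertex by (auto simp: grafted_leaves_def)
    moreover have "(Suc n, j) \<in> T \<union> grafted_leaves n j" by (simp add: grafted_leaves_def)
    ultimately show ?thesis by (metis atLeastAtMost_iff le_Suc_eq)
  qed
  have columns: "(\<forall>k\<in>{1..Suc n}. \<exists>i. (i, k) \<in> T \<union> grafted_leaves n j) \<longleftrightarrow>
      (\<forall>k\<in>{1..n}. \<exists>i. (i, k) \<in> T)"
  proof -
    have "(\<exists>i. (i, k) \<in> T \<union> grafted_leaves n j) \<longleftrightarrow> (\<exists>i. (i, k) \<in> T)" if "k \<le> n" for k
      using that vertex by (auto simp: grafted_leaves_def)
    moreover have "(n, Suc n) \<in> T \<union> grafted_leaves n j" by (simp add: grafted_leaves_def)
    ultimately show ?thesis by (metis atLeastAtMost_iff le_Suc_eq)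
  qed
  have "T \<union> grafted_leaves n j \<subseteq> {1..Suc n} \<times> {1..Suc n}"
    using in_squareD bounds by (fastforce simp: grafted_leaves_def)
  moreover have "(1, 1) \<in> T \<union> grafted_leaves n j \<longleftrightarrow> (1, 1) \<in> T"
    using grafted_leaves_outside(3) by simp
  ultimately show ?thesis
    using in_square rows columns exclusive_parent_graft_iff binary_branching_graft_iff
    unfolding is_CNM_iff by blast
qed

end

section \<open>Extending a permutation\<close>

definition extend_perm :: "nat \<Rightarrow> (nat \<Rightarrow> nat) \<Rightarrow> nat \<Rightarrow> nat" where
  "extend_perm n \<sigma> i = (if i = n then Suc n else if i = Suc n then \<sigma> n else \<sigma> i)"

lemma extend_perm_permutes:
  assumes "\<sigma> permutes {1..n}" "1 \<le> n"
  shows "extend_perm n \<sigma> permutes {1..Suc n}"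
proof -
  have "\<sigma> (Suc n) = Suc n" using permutes_not_in[OF assms(1)] by auto
  then have "extend_perm n \<sigma> = \<sigma> \<circ> Transposition.transpose n (Suc n)"
    by (auto simp: fun_eq_iff extend_perm_def Transposition.transpose_def)
  moreover have "\<sigma> permutes {1..Suc n}" by (rule permutes_subset[OF assms(1)]) auto
  moreover have "Transposition.transpose n (Suc n) permutes {1..Suc n}"
    using assms(2) by (intro permutes_swap_id) auto
  ultimately show ?thesis by (metis permutes_compose)
qed

lemma inj_on_extend_perm: "inj_on (extend_perm n) {\<sigma>. \<sigma> permutes {1..n}}"
proof (rule inj_onI, rule ext)
  fix \<sigma> \<tau> x
  assume \<sigma>: "\<sigma> \<in> {\<sigma>. \<sigma> permutes {1..n}}" and \<tau>: "\<tau> \<in> {\<tau>. \<tau> permutes {1..n}}"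
    and eq: "extend_perm n \<sigma> = extend_perm n \<tau>"
  consider "x = n" | "x = Suc n" | "x \<noteq> n" "x \<noteq> Suc n" by blast
  then show "\<sigma> x = \<tau> x"
  proof cases
    case 1
    then show ?thesis using fun_cong[OF eq, of "Suc n"] by (simp add: extend_perm_def)
  next
    case 2
    then show ?thesis using permutes_not_in[of \<sigma> "{1..n}" x] permutes_not_in[of \<tau> "{1..n}" x] \<sigma> \<tau> by auto
  next
    case 3
    then show ?thesis using fun_cong[OF eq, of x] by (simp add: extend_perm_def)
  qed
qed

lemma perm_matrix_subset_square: "\<sigma> permutes {1..n} \<Longrightarrow> perm_matrix n \<sigma> \<subseteq> {1..n} \<times> {1..n}"
  unfolding perm_matrix_def using permutes_in_image by fastforce

lemma perm_matrix_extend_perm: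
  assumes "1 \<le> n"
  shows "perm_matrix (Suc n) (extend_perm n \<sigma>) =
    perm_matrix n \<sigma> - {(n, \<sigma> n)} \<union> grafted_leaves n (\<sigma> n)"
proof (intro set_eqI iffI)
  fix p assume "p \<in> perm_matrix (Suc n) (extend_perm n \<sigma>)"
  then obtain i where "i \<in> {1..Suc n}" "p = (i, extend_perm n \<sigma> i)"
    unfolding perm_matrix_def by auto
  then show "p \<in> perm_matrix n \<sigma> - {(n, \<sigma> n)} \<union> grafted_leaves n (\<sigma> n)"
    by (cases "i = n \<or> i = Suc n")
      (auto simp: perm_matrix_def grafted_leaves_def extend_perm_def le_Suc_eq)
next
  fix p assume "p \<in> perm_matrix n \<sigma> - {(n, \<sigma> n)} \<union> grafted_leaves n (\<sigma> n)"
  then consider "p = (Suc n, \<sigma> n)" | "p = (n, Suc n)" | i where "i \<in> {1..n}" "i \<noteq> n" "p = (i, \<sigma> i)"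
    unfolding perm_matrix_def grafted_leaves_def by auto
  then show "p \<in> perm_matrix (Suc n) (extend_perm n \<sigma>)"
  proof cases
    case 1
    then show ?thesis unfolding perm_matrix_def extend_perm_def by force
  next
    case 2
    then show ?thesis using assms unfolding perm_matrix_def extend_perm_def by force
  next
    case 3
    then show ?thesis unfolding perm_matrix_def extend_perm_def by force
  qed
qed

lemma graft_site_of_CNM:
  assumes "is_CNM n T" "leaves T = perm_matrix n \<sigma>" "1 \<le> n"
  shows "graft_site T n (\<sigma> n)"
proof
  show "T \<subseteq> {1..n} \<times> {1..n}" using assms(1) unfolding is_CNM_iff by blast
  have "(n, \<sigma> n) \<in> leaves T" using assms(2,3) unfolding perm_matrix_def by auto
  then show "(n, \<sigma> n) \<in> T" unfolding leaves_def by simp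
  show "y = \<sigma> n" if "(n, y) \<in> T" for y using CNM_last_row[OF assms(1,2) that] .
qed

lemma CNM_graft:
  assumes "is_CNM n T" "leaves T = perm_matrix n \<sigma>" "1 \<le> n"
  shows "is_CNM (Suc n) (T \<union> grafted_leaves n (\<sigma> n))"
    "leaves (T \<union> grafted_leaves n (\<sigma> n)) = perm_matrix (Suc n) (extend_perm n \<sigma>)"
proof -
  interpret graft_site T n "\<sigma> n" by (rule graft_site_of_CNM[OF assms])
  show "is_CNM (Suc n) (T \<union> grafted_leaves n (\<sigma> n))" using assms(1) is_CNM_graft_iff by simp
  have "exclusive_parent T" using assms(1) unfolding is_CNM_iff by blast
  then show "leaves (T \<union> grafted_leaves n (\<sigma> n)) = perm_matrix (Suc n) (extend_perm n \<sigma>)"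
    using leaves_graft assms(2) perm_matrix_extend_perm[OF assms(3)] by simp
qed

context
  fixes n :: nat and \<sigma> :: "nat \<Rightarrow> nat" and T' :: "(nat \<times> nat) set"
  assumes perm: "\<sigma> permutes {1..n}" and n_pos: "1 \<le> n" and CNM: "is_CNM (Suc n) T'"
    and leaves_T': "leaves T' = perm_matrix (Suc n) (extend_perm n \<sigma>)"
begin

lemma extended_CNM_in_square: "(a, c) \<in> T' \<Longrightarrow> 1 \<le> a \<and> a \<le> Suc n \<and> 1 \<le> c \<and> c \<le> Suc n"
  using CNM unfolding is_CNM_iff by auto

lemma extended_CNM_last_row: "(Suc n, x) \<in> T' \<Longrightarrow> x = \<sigma> n"
  using CNM_last_row[OF CNM leaves_T'] by (simp add: extend_perm_def)

lemma extended_CNM_last_column: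
  assumes "(y, Suc n) \<in> T'"
  shows "y = n"
proof -
  have "extend_perm n \<sigma> y = extend_perm n \<sigma> n"
    using CNM_last_column[OF CNM leaves_T' assms] by (simp add: extend_perm_def)
  then show ?thesis using permutes_inj[OF extend_perm_permutes[OF perm n_pos]] by (simp add: inj_eq)
qed

lemma extended_CNM_row:
  assumes "(n, y) \<in> T'"
  shows "y = \<sigma> n \<or> y = Suc n"
proof (cases "y = \<sigma> n")
  case False
  have "(n, y) \<in> leaves T'"
  proof (rule leaf_if_lowest_in_column[OF CNM assms])
    fix a assume "n < a"
    show "(a, y) \<notin> T'"
    proof
      assume a: "(a, y) \<in> T'"
      then have "a = Suc n" using extended_CNM_in_square \<open>n < a\<close> by fastforce
      then show False using extended_CNM_last_row[of y] a False by simp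
    qed
  qed
  then show ?thesis using leaves_T' unfolding perm_matrix_def extend_perm_def by auto
qed simp

lemma extended_CNM_vertex: "(n, \<sigma> n) \<in> T'"
proof -
  \<comment> \<open>The leaf \<open>(n, n + 1)\<close> has nothing above it, so its parent lies to its left in row \<open>n\<close>.\<close>
  have "(n, Suc n) \<in> leaves T'" using n_pos unfolding leaves_T' perm_matrix_def extend_perm_def by auto
  then have "(n, Suc n) \<in> T'" unfolding leaves_def by simp
  moreover have "\<not> has_above T' n (Suc n)"
    unfolding has_above_def by (fastforce dest: extended_CNM_last_column)
  ultimately have "has_left T' n (Suc n)"
    using CNM n_pos unfolding is_CNM_iff exclusive_parent_def by auto
  then obtain y where "y < Suc n" "(n, y) \<in> T'" unfolding has_left_def by blast
  then show ?thesis using extended_CNM_row[of y] by auto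
qed

lemma graft_site_of_extended_CNM: "graft_site (T' - grafted_leaves n (\<sigma> n)) n (\<sigma> n)"
proof
  show "T' - grafted_leaves n (\<sigma> n) \<subseteq> {1..n} \<times> {1..n}"
  proof
    fix p assume p: "p \<in> T' - grafted_leaves n (\<sigma> n)"
    obtain a c where ac: "p = (a, c)" by fastforce
    have "a \<noteq> Suc n" using p ac extended_CNM_last_row[of c] by (auto simp: grafted_leaves_def)
    moreover have "c \<noteq> Suc n" using p ac extended_CNM_last_column[of a] by (auto simp: grafted_leaves_def)
    ultimately show "p \<in> {1..n} \<times> {1..n}" using p ac extended_CNM_in_square[of a c] by auto
  qed
  have "\<sigma> n \<le> n" using permutes_in_image[OF perm, of n] n_pos by simp
  then show "(n, \<sigma> n) \<in> T' - grafted_leaves n (\<sigma> n)"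
    using extended_CNM_vertex by (auto simp: grafted_leaves_def)
  show "y = \<sigma> n" if "(n, y) \<in> T' - grafted_leaves n (\<sigma> n)" for y
    using that extended_CNM_row[of y] by (auto simp: grafted_leaves_def)
qed

lemma CNM_ungraft:
  obtains T where "T' = T \<union> grafted_leaves n (\<sigma> n)" "is_CNM n T" "leaves T = perm_matrix n \<sigma>"
proof -
  let ?G = "grafted_leaves n (\<sigma> n)"
  let ?T = "T' - ?G"
  interpret graft_site ?T n "\<sigma> n" by (rule graft_site_of_extended_CNM)
  have T': "T' = ?T \<union> ?G"
    using leaves_T' perm_matrix_extend_perm[OF n_pos] unfolding leaves_def by auto
  have C: "is_CNM n ?T" using is_CNM_graft_iff CNM T' by simp
  then have "leaves ?T - {(n, \<sigma> n)} \<union> ?G = perm_matrix n \<sigma> - {(n, \<sigma> n)} \<union> ?G"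
    using leaves_graft T' leaves_T' perm_matrix_extend_perm[OF n_pos] unfolding is_CNM_iff by auto
  moreover have "(n, \<sigma> n) \<in> leaves ?T" using C vertex_leaf unfolding is_CNM_iff by blast
  moreover have "(n, \<sigma> n) \<in> perm_matrix n \<sigma>" using n_pos unfolding perm_matrix_def by auto
  moreover have "leaves ?T \<inter> ?G = {}" unfolding leaves_def by auto
  moreover have "perm_matrix n \<sigma> \<inter> ?G = {}"
    using perm_matrix_subset_square[OF perm] by (fastforce simp: grafted_leaves_def)
  ultimately have "leaves ?T = perm_matrix n \<sigma>" by blast
  with T' C show ?thesis by (rule that)
qed

end

lemma num_CNM_extend_perm:
  assumes \<sigma>: "\<sigma> permutes {1..n}" and n: "1 \<le> n"
  shows "num_CNM (Suc n) (extend_perm n \<sigma>) = num_CNM n \<sigma>"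
proof -
  let ?G = "grafted_leaves n (\<sigma> n)"
  let ?C = "\<lambda>m \<tau>. {T. is_CNM m T \<and> leaves T = perm_matrix m \<tau>}"
  have "?C (Suc n) (extend_perm n \<sigma>) = (\<lambda>T. T \<union> ?G) ` ?C n \<sigma>"
  proof (intro equalityI subsetI)
    fix T' assume "T' \<in> ?C (Suc n) (extend_perm n \<sigma>)"
    then obtain T where "T' = T \<union> ?G" "T \<in> ?C n \<sigma>"
      using CNM_ungraft[OF \<sigma> n] by (metis (mono_tags, lifting) mem_Collect_eq)
    then show "T' \<in> (\<lambda>T. T \<union> ?G) ` ?C n \<sigma>" by blast
  next
    fix T' assume "T' \<in> (\<lambda>T. T \<union> ?G) ` ?C n \<sigma>"
    then show "T' \<in> ?C (Suc n) (extend_perm n \<sigma>)" using CNM_graft[OF _ _ n] by auto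
  qed
  moreover have "inj_on (\<lambda>T. T \<union> ?G) (?C n \<sigma>)"
  proof (rule inj_onI)
    fix T1 T2 assume "T1 \<in> ?C n \<sigma>" "T2 \<in> ?C n \<sigma>" and eq: "T1 \<union> ?G = T2 \<union> ?G"
    then have "T1 \<inter> ?G = {}" "T2 \<inter> ?G = {}"
      by (simp_all add: is_CNM_iff square_Int_grafted_leaves)
    with eq show "T1 = T2" by blast
  qed
  ultimately show ?thesis unfolding num_CNM_def by (simp add: card_image)
qed

section \<open>Transposition\<close>

lemma has_above_swap: "has_above (prod.swap ` T) j i = has_left T i j"
  unfolding has_above_def has_left_def by auto

lemma has_left_swap: "has_left (prod.swap ` T) j i = has_above T i j"
  unfolding has_above_def has_left_def by auto

lemma exclusive_parent_swap: "exclusive_parent T \<Longrightarrow> exclusive_parent (prod.swap ` T)"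
  unfolding exclusive_parent_def by (auto simp: has_above_swap has_left_swap)

lemma parent_swap:
  assumes "exclusive_parent T" "(i, j) \<in> T" "(i, j) \<noteq> (1, 1)"
  shows "parent (prod.swap ` T) (j, i) = prod.swap (parent T (i, j))"
proof (cases "has_above T i j")
  case True
  then have "\<not> has_above (prod.swap ` T) j i"
    using assms unfolding exclusive_parent_def by (auto simp: has_above_swap)
  moreover obtain i' where "parent T (i, j) = (i', j)" "i' < i" "(i', j) \<in> T"
    "\<And>x. i' < x \<Longrightarrow> x < i \<Longrightarrow> (x, j) \<notin> T"
    using parent_above[OF True] by blast
  ultimately show ?thesis by (simp add: parent_left_eq)
next
  case False
  moreover have "has_left T i j" using False assms unfolding exclusive_parent_def by auto
  ultimately obtain j' where "parent T (i, j) = (i, j')" "j' < j" "(i, j') \<in> T"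
    "\<And>y. j' < y \<Longrightarrow> y < j \<Longrightarrow> (i, y) \<notin> T"
    using parent_left by blast
  then show ?thesis by (simp add: parent_above_eq)
qed

lemma children_swap:
  assumes "exclusive_parent T"
  shows "children (prod.swap ` T) (j, i) = prod.swap ` children T (i, j)"
proof (intro set_eqI)
  fix q :: "nat \<times> nat"
  obtain b a where q: "q = (b, a)" by fastforce
  have "q \<in> children (prod.swap ` T) (j, i) \<longleftrightarrow>
      (a, b) \<in> T \<and> (a, b) \<noteq> (1, 1) \<and> parent (prod.swap ` T) (b, a) = (j, i)"
    unfolding children_def q by auto
  also have "\<dots> \<longleftrightarrow> (a, b) \<in> T \<and> (a, b) \<noteq> (1, 1) \<and> parent T (a, b) = (i, j)"
    using parent_swap[OF assms, of a b] by (cases "parent T (a, b)") auto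
  also have "\<dots> \<longleftrightarrow> q \<in> prod.swap ` children T (i, j)"
    unfolding children_def q by auto
  finally show "q \<in> children (prod.swap ` T) (j, i) \<longleftrightarrow> q \<in> prod.swap ` children T (i, j)" .
qed

lemma leaves_swap:
  assumes "exclusive_parent T"
  shows "leaves (prod.swap ` T) = prod.swap ` leaves T"
proof (intro set_eqI)
  fix q :: "nat \<times> nat"
  obtain j i where q: "q = (j, i)" by fastforce
  have "children (prod.swap ` T) (j, i) = {} \<longleftrightarrow> children T (i, j) = {}"
    using children_swap[OF assms, of j i] by simp
  then show "q \<in> leaves (prod.swap ` T) \<longleftrightarrow> q \<in> prod.swap ` leaves T"
    unfolding leaves_def q by auto
qed

lemma is_CNM_swap:
  assumes "is_CNM n T"
  shows "is_CNM n (prod.swap ` T)"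
proof -
  have T: "exclusive_parent T" "binary_branching T" using assms unfolding is_CNM_iff by auto
  have "binary_branching (prod.swap ` T)"
    unfolding binary_branching_def
  proof
    fix p assume "p \<in> prod.swap ` T"
    then obtain i j where p: "p = (j, i)" "(i, j) \<in> T" by auto
    have "card (children (prod.swap ` T) p) = card (children T (i, j))"
      unfolding p children_swap[OF T(1)] by (rule card_image) simp
    then show "card (children (prod.swap ` T) p) = 0 \<or> card (children (prod.swap ` T) p) = 2"
      using T(2) p(2) unfolding binary_branching_def by simp
  qed
  then show ?thesis using assms exclusive_parent_swap[OF T(1)] unfolding is_CNM_iff by auto
qed

lemma perm_matrix_inv:
  assumes "\<sigma> permutes {1..n}"
  shows "perm_matrix n (inv \<sigma>) = prod.swap ` perm_matrix n \<sigma>"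
proof (intro set_eqI)
  fix q :: "nat \<times> nat"
  obtain x y where q: "q = (x, y)" by fastforce
  have "q \<in> perm_matrix n (inv \<sigma>) \<longleftrightarrow> x \<in> {1..n} \<and> y = inv \<sigma> x"
    unfolding perm_matrix_def q by auto
  also have "\<dots> \<longleftrightarrow> y \<in> {1..n} \<and> x = \<sigma> y"
    using permutes_inv_eq[OF assms, of x y] permutes_in_image[OF assms, of y] by auto
  also have "\<dots> \<longleftrightarrow> q \<in> prod.swap ` perm_matrix n \<sigma>"
    unfolding perm_matrix_def q by auto
  finally show "q \<in> perm_matrix n (inv \<sigma>) \<longleftrightarrow> q \<in> prod.swap ` perm_matrix n \<sigma>" .
qed

lemma swap_CNM_inv:
  assumes "\<sigma> permutes {1..n}" "is_CNM n T" "leaves T = perm_matrix n \<sigma>"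
  shows "is_CNM n (prod.swap ` T)" "leaves (prod.swap ` T) = perm_matrix n (inv \<sigma>)"
  using is_CNM_swap[OF assms(2)] leaves_swap assms perm_matrix_inv unfolding is_CNM_iff by auto

lemma num_CNM_inv:
  assumes "\<sigma> permutes {1..n}"
  shows "num_CNM n (inv \<sigma>) = num_CNM n \<sigma>"
proof -
  let ?C = "\<lambda>\<tau>. {T. is_CNM n T \<and> leaves T = perm_matrix n \<tau>}"
  have swap_swap_image: "prod.swap ` prod.swap ` T = T" for T :: "(nat \<times> nat) set"
    by (simp add: image_image)
  have swap_mem: "prod.swap ` T \<in> ?C (inv \<tau>)" if "\<tau> permutes {1..n}" "T \<in> ?C \<tau>" for \<tau> T
    using swap_CNM_inv[OF that(1)] that(2) by blast
  have "?C (inv \<sigma>) = image prod.swap ` ?C \<sigma>"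
  proof (intro equalityI subsetI)
    fix T assume "T \<in> ?C (inv \<sigma>)"
    then have "prod.swap ` T \<in> ?C \<sigma>"
      using swap_mem[OF permutes_inv[OF assms]] permutes_inv_inv[OF assms] by simp
    then show "T \<in> image prod.swap ` ?C \<sigma>" by (rule image_eqI[where f = "image prod.swap", OF swap_swap_image[symmetric]])
  next
    fix T assume "T \<in> image prod.swap ` ?C \<sigma>"
    then show "T \<in> ?C (inv \<sigma>)" using swap_mem[OF assms] by blast
  qed
  moreover have "inj_on (image prod.swap) X" for X :: "(nat \<times> nat) set set"
    by (rule inj_on_inverseI[where g = "image prod.swap"]) (rule swap_swap_image)
  ultimately show ?thesis unfolding num_CNM_def by (simp add: card_image)
qed

section \<open>Two disjoint injections\<close>

lemma num_CNM_eq_0_if_fixes_last: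
  assumes "2 \<le> n" "\<sigma> permutes {1..n}" "\<sigma> n = n"
  shows "num_CNM n \<sigma> = 0"
proof -
  have "\<not> (is_CNM n T \<and> leaves T = perm_matrix n \<sigma>)" for T
  proof
    assume "is_CNM n T \<and> leaves T = perm_matrix n \<sigma>"
    then have C: "is_CNM n T" and L: "leaves T = perm_matrix n \<sigma>" by auto
    have "(n, n) \<in> leaves T" using L assms(1,3) unfolding perm_matrix_def by force
    then have nn: "(n, n) \<in> T" unfolding leaves_def by simp
    have "\<not> has_above T n n"
    proof
      assume "has_above T n n"
      then obtain x where "x < n" "(x, n) \<in> T" unfolding has_above_def by auto
      then have "\<sigma> x = \<sigma> n" using CNM_last_column[OF C L, of x] assms(3) by simp
      then show False using permutes_inj[OF assms(2)] \<open>x < n\<close> by (auto dest: injD)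
    qed
    moreover have "\<not> has_left T n n"
    proof
      assume "has_left T n n"
      then obtain y where "y < n" "(n, y) \<in> T" unfolding has_left_def by auto
      then show False using CNM_last_row[OF C L, of y] assms(3) by simp
    qed
    ultimately show False using C nn assms(1) unfolding is_CNM_iff exclusive_parent_def by auto
  qed
  then have "{T. is_CNM n T \<and> leaves T = perm_matrix n \<sigma>} = {}" by blast
  then show ?thesis unfolding num_CNM_def by (simp only: card.empty)
qed

lemma two_mul_card_le_if_disjoint_injections:
  assumes "finite B" "inj_on f A" "inj_on g A" "f ` A \<subseteq> B" "g ` A \<subseteq> B" "f ` A \<inter> g ` A = {}"
  shows "2 * card A \<le> card B"
proof -
  have "2 * card A = card (f ` A) + card (g ` A)" using assms(2,3) by (simp add: card_image)
  also have "\<dots> = card (f ` A \<union> g ` A)"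
    using assms(1,4-6) by (simp add: card_Un_disjoint finite_subset)
  also have "\<dots> \<le> card B" using assms(1,4,5) by (simp add: card_mono)
  finally show ?thesis .
qed

definition CNM_count_class :: "nat \<Rightarrow> nat \<Rightarrow> (nat \<Rightarrow> nat) set" where
  "CNM_count_class m k = {\<sigma>. \<sigma> permutes {1..m} \<and> num_CNM m \<sigma> = k}"

lemma inv_mem_CNM_count_class: "\<sigma> \<in> CNM_count_class m k \<Longrightarrow> inv \<sigma> \<in> CNM_count_class m k"
  unfolding CNM_count_class_def by (simp add: permutes_inv num_CNM_inv)

lemma extend_perm_mem_CNM_count_class:
  assumes "1 \<le> n" "\<sigma> \<in> CNM_count_class n k"
  shows "extend_perm n \<sigma> \<in> CNM_count_class (Suc n) k"
  using assms extend_perm_permutes[of \<sigma> n] num_CNM_extend_perm[of \<sigma> n]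
  unfolding CNM_count_class_def by simp

lemma finite_CNM_count_class: "finite (CNM_count_class m k)"
  unfolding CNM_count_class_def
  by (rule finite_subset[OF _ finite_permutations[of "{1..m}"]]) auto

lemma inj_on_conj_extend_perm:
  assumes "1 \<le> n"
  shows "inj_on (\<lambda>\<sigma>. inv (extend_perm n (inv \<sigma>))) {\<sigma>. \<sigma> permutes {1..n}}"
proof (rule inj_onI)
  fix \<sigma> \<rho> assume "\<sigma> \<in> {\<sigma>. \<sigma> permutes {1..n}}" "\<rho> \<in> {\<sigma>. \<sigma> permutes {1..n}}"
    and eq: "inv (extend_perm n (inv \<sigma>)) = inv (extend_perm n (inv \<rho>))"
  then have perm: "\<sigma> permutes {1..n}" "\<rho> permutes {1..n}" by auto
  then have "extend_perm n (inv \<sigma>) = extend_perm n (inv \<rho>)"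
    using eq permutes_inv_inv[OF extend_perm_permutes[OF permutes_inv assms]] by metis
  then have "inv \<sigma> = inv \<rho>"
    using inj_on_extend_perm permutes_inv[OF perm(1)] permutes_inv[OF perm(2)] by (blast dest: inj_onD)
  then show "\<sigma> = \<rho>" using permutes_inv_inv perm by metis
qed

lemma fixes_last_if_extend_perm_eq_conj:
  assumes "\<rho> permutes {1..n}" "1 \<le> n" "extend_perm n \<sigma> = inv (extend_perm n (inv \<rho>))"
  shows "\<sigma> n = n"
proof -
  have "inv (extend_perm n (inv \<rho>)) (Suc n) = n"
    using permutes_inverses(2)[OF extend_perm_permutes[OF permutes_inv[OF assms(1)] assms(2)], of n]
    by (simp add: extend_perm_def)
  then show ?thesis using fun_cong[OF assms(3), of "Suc n"] by (simp add: extend_perm_def)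
qed

theorem theorem5p1:
  fixes n k :: nat
  assumes "n \<ge> 2" and "k \<ge> 1"
  shows "b (n + 1) k \<ge> 2 * b n k"
proof -
  have n: "1 \<le> n" using assms(1) by simp
  let ?C = CNM_count_class and ?f = "extend_perm n" and ?g = "\<lambda>\<sigma>. inv (extend_perm n (inv \<sigma>))"
  have perms: "?C m k \<subseteq> {\<sigma>. \<sigma> permutes {1..m}}" for m by (auto simp: CNM_count_class_def)
  have "2 * card (?C n k) \<le> card (?C (Suc n) k)"
  proof (rule two_mul_card_le_if_disjoint_injections[OF finite_CNM_count_class])
    show "inj_on ?f (?C n k)" "inj_on ?g (?C n k)"
      using inj_on_extend_perm inj_on_conj_extend_perm[OF n] perms by (blast intro: inj_on_subset)+
    show "?f ` ?C n k \<subseteq> ?C (Suc n) k" "?g ` ?C n k \<subseteq> ?C (Suc n) k"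
      using extend_perm_mem_CNM_count_class[OF n] inv_mem_CNM_count_class by auto
    show "?f ` ?C n k \<inter> ?g ` ?C n k = {}"
    proof (rule equals0I)
      fix \<tau> assume "\<tau> \<in> ?f ` ?C n k \<inter> ?g ` ?C n k"
      then obtain \<sigma> \<rho> where \<sigma>: "\<sigma> \<in> ?C n k" and \<rho>: "\<rho> \<in> ?C n k" and "?f \<sigma> = ?g \<rho>" by blast
      then have "\<sigma> n = n" using fixes_last_if_extend_perm_eq_conj[OF _ n] perms by blast
      then show False
        using num_CNM_eq_0_if_fixes_last[OF assms(1)] \<sigma> assms(2) by (auto simp: CNM_count_class_def)
    qed
  qed
  then show ?thesis by (simp add: b_def CNM_count_class_def)
qed

end
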